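(* Let $\mathcal G=(\mathcal V,\mathcal E,W)$ be a network, $h\in\mathbb{R}^{\mathcal V}$, and consider the SNC game with binary actions on $\mathcal G$ with external field $h$. Let $\mathcal V=\mathcal R\cup\mathcal S$ with $\mathcal R\cap\mathcal S=\emptyset$ be a binary partition such that the subnetwork $\mathcal G_{\mathcal R}$ is structurally balanced, and let $\tau\in\{\pm1\}^{\mathcal R}$ be such that $$\tau_iW_{ij}\tau_j\ge 0\qquad\forall i,j\in\mathcal R.$$ If $$w_i^{\mathcal R}+\tau_ih_i\ge w_i^{\mathcal S}\qquad\forall i\in\mathcal R,$$ and $\mathcal N_{\mathcal S}^{(\tau)}\neq\emptyset$, then there exists a Nash equilibrium $x^*\in\mathcal N$ of the SNC game such that $x^*_{\mathcal R}=\tau$.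
   Context: A network is a triple $\mathcal G=(\mathcal V,\mathcal E,W)$ where $\mathcal V$ is a finite nonempty set, $\mathcal E\subseteq\mathcal V\times\mathcal V$, and $W\in\mathbb{R}^{\mathcal V\times\mathcal V}$ has zero diagonal and satisfies $W_{ij}\neq0$ iff $(i,j)\in\mathcal E$ (weights may have either sign; $W$ need not be symmetric). For $\mathcal U\subseteq\mathcal V$, the subnetwork $\mathcal G_{\mathcal U}$ has node set $\mathcal U$, links $\mathcal E\cap(\mathcal U\times\mathcal U)$ and weight matrix $W_{\mathcal U\mathcal U}$ (restriction of $W$). A network is structurally balanced if its node set can be written as a disjoint union $\mathcal V_1\cup\mathcal V_2$ with $W_{ij}\ge0$ whenever $i,j$ lie in the same part and $W_{ij}\le0$ whenever $i,j$ lie in different parts. For $i\in\mathcal V$ and $\mathcal B\subseteq\mathcal V$, $w_i^{\mathcal B}=\sum_{j\in\mathcal B}|W_{ij}|$. The SNC (signed network coordination) game with binary actions on $\mathcal G$ with external field $h\in\mathbb{R}^{\mathcal V}$ has player set $\mathcal V$, each player having action set $\{-1,+1\}$, strategy profile set $\mathcal X=\{\pm1\}^{\mathcal V}$, and utility $u_i(x)=h_ix_i+x_i\sum_{j\in\mathcal V}W_{ij}x_j$ for $i\in\mathcal V$. The best response of player $i$ is $\mathcal B_i(x_{-i})=\arg\max_{x_i\in\{\pm1\}}u_i(x_i,x_{-i})$, where $x_{-i}$ is the profile of the other players; a (pure) Nash equilibrium is $x^*$ with $x^*_i\in\mathcal B_i(x^*_{-i})$ for all $i$; $\mathcal N$ denotes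 the set of Nash equilibria. For a binary partition $\mathcal V=\mathcal R\cup\mathcal S$ and $y\in\{\pm1\}^{\mathcal R}$, the $\mathcal S$-restricted game with strategy profile of players in $\mathcal R$ frozen to $y$ is the game with player set $\mathcal S$, actions $\{\pm1\}$, and utilities $u_i^{(y)}(z)=u_i(y,z)=z_i\sum_{j\in\mathcal S}W_{ij}z_j+z_i\sum_{j\in\mathcal R}W_{ij}y_j+z_ih_i$ for $i\in\mathcal S$, $z\in\{\pm1\}^{\mathcal S}$; $\mathcal N_{\mathcal S}^{(y)}$ denotes its set of Nash equilibria. *)

theory Defs
  imports "HOL-Analysis.Analysis"
begin

text \<open>W is a function on node pairs; it is required to vanish
  outside V x V (it only matters on V x V).\<close>
definition network :: "'a set \<Rightarrow> ('a \<times> 'a) set \<Rightarrow> ('a \<Rightarrow> 'a \<Rightarrow> real) \<Rightarrow> bool" where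
  "network V E W \<longleftrightarrow> finite V \<and> V \<noteq> {} \<and> E \<subseteq> V \<times> V \<and>
     (\<forall>i\<in>V. W i i = 0) \<and> (\<forall>i\<in>V. \<forall>j\<in>V. W i j \<noteq> 0 \<longleftrightarrow> (i, j) \<in> E) \<and>
     (\<forall>i j. (i \<notin> V \<or> j \<notin> V) \<longrightarrow> W i j = 0)"

definition structurally_balanced :: "'a set \<Rightarrow> ('a \<Rightarrow> 'a \<Rightarrow> real) \<Rightarrow> bool" where
  "structurally_balanced U W \<longleftrightarrow> (\<exists>U1 U2. U1 \<inter> U2 = {} \<and> U1 \<union> U2 = U \<and>
     (\<forall>i\<in>U. \<forall>j\<in>U. ((i \<in> U1 \<longleftrightarrow> j \<in> U1) \<longrightarrow> W i j \<ge> 0) \<and>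
                     ((i \<in> U1 \<longleftrightarrow> j \<in> U2) \<longrightarrow> W i j \<le> 0)))"

definition wsum :: "('a \<Rightarrow> 'a \<Rightarrow> real) \<Rightarrow> 'a \<Rightarrow> 'a set \<Rightarrow> real" where
  "wsum W i B = (\<Sum>j\<in>B. \<bar>W i j\<bar>)"

definition profile :: "'a set \<Rightarrow> ('a \<Rightarrow> real) \<Rightarrow> bool" where
  "profile A x \<longleftrightarrow> (\<forall>i\<in>A. x i = 1 \<or> x i = -1)"

definition utility :: "'a set \<Rightarrow> ('a \<Rightarrow> 'a \<Rightarrow> real) \<Rightarrow> ('a \<Rightarrow> real) \<Rightarrow> 'a \<Rightarrow> ('a \<Rightarrow> real) \<Rightarrow> real" where
  "utility V W h i x = h i * x i + x i * (\<Sum>j\<in>V. W i j * x j)"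

definition best_response :: "'a set \<Rightarrow> ('a \<Rightarrow> 'a \<Rightarrow> real) \<Rightarrow> ('a \<Rightarrow> real) \<Rightarrow> 'a \<Rightarrow> ('a \<Rightarrow> real) \<Rightarrow> real set" where
  "best_response V W h i x = {a \<in> {-1, 1}. \<forall>b \<in> {-1, 1}.
      utility V W h i (x(i := b)) \<le> utility V W h i (x(i := a))}"

definition nash :: "'a set \<Rightarrow> ('a \<Rightarrow> 'a \<Rightarrow> real) \<Rightarrow> ('a \<Rightarrow> real) \<Rightarrow> ('a \<Rightarrow> real) \<Rightarrow> bool" where
  "nash V W h x \<longleftrightarrow> profile V x \<and> (\<forall>i\<in>V. x i \<in> best_response V W h i x)"

definition join :: "'a set \<Rightarrow> ('a \<Rightarrow> real) \<Rightarrow> ('a \<Rightarrow> real) \<Rightarrow> ('a \<Rightarrow> real)" where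
  "join R y z = (\<lambda>j. if j \<in> R then y j else z j)"

definition restricted_nash :: "'a set \<Rightarrow> ('a \<Rightarrow> 'a \<Rightarrow> real) \<Rightarrow> ('a \<Rightarrow> real) \<Rightarrow> 'a set \<Rightarrow> 'a set
    \<Rightarrow> ('a \<Rightarrow> real) \<Rightarrow> ('a \<Rightarrow> real) \<Rightarrow> bool" where
  "restricted_nash V W h R S y z \<longleftrightarrow> profile S z \<and>
     (\<forall>i\<in>S. \<forall>b \<in> {-1, 1}.
        utility V W h i (join R y (z(i := b))) \<le> utility V W h i (join R y z))"

end

theory Submission
  imports Defs
begin

text \<open>Each player's utility is linear in its own action, with slope the local field
  h i + (\<Sum>j. W i j * x j); a best response is therefore any action agreeing in sign with
  that field. Freeze R to \<tau> and let S play a Nash equilibrium of the restricted game. The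
  S-players are then best-responding. For i \<in> R the alignment of \<tau> with W on R makes the
  R-part of \<tau> i times the field equal to w_i^R, while the S-part is at least -w_i^S, so the
  hypothesis w_i^R + \<tau> i h i \<ge> w_i^S says exactly that \<tau> i agrees in sign with the field.\<close>

definition local_field :: "'a set \<Rightarrow> ('a \<Rightarrow> 'a \<Rightarrow> real) \<Rightarrow> ('a \<Rightarrow> real) \<Rightarrow> 'a \<Rightarrow> ('a \<Rightarrow> real) \<Rightarrow> real"
  where "local_field V W h i x = h i + (\<Sum>j\<in>V. W i j * x j)"

lemma utility_fun_upd_self:
  assumes "W i i = 0"
  shows "utility V W h i (x(i := b)) = b * local_field V W h i x"
proof -
  have "(\<Sum>j\<in>V. W i j * (x(i := b)) j) = (\<Sum>j\<in>V. W i j * x j)"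
    by (rule sum.cong) (auto simp: assms)
  then show ?thesis by (simp add: utility_def local_field_def algebra_simps)
qed

lemma best_responseI_sign:
  assumes "W i i = 0" and "x i \<in> {-1, 1}" and "0 \<le> x i * local_field V W h i x"
  shows "x i \<in> best_response V W h i x"
proof -
  have "utility V W h i x = x i * local_field V W h i x"
    using utility_fun_upd_self[of W i V h x "x i"] assms(1) by simp
  then show ?thesis
    using assms by (auto simp: best_response_def utility_fun_upd_self)
qed

lemma abs_sum_weighted_le_wsum:
  assumes "\<forall>j\<in>B. \<bar>y j\<bar> \<le> 1"
  shows "\<bar>\<Sum>j\<in>B. W i j * y j\<bar> \<le> wsum W i B"
  unfolding wsum_def
proof (rule order_trans[OF sum_abs sum_mono])
  fix j assume "j \<in> B"
  then show "\<bar>W i j * y j\<bar> \<le> \<bar>W i j\<bar>"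
    using assms by (simp add: abs_mult mult_left_le)
qed

lemma sum_aligned_eq_wsum:
  assumes "profile B \<sigma>" and "\<sigma> i \<in> {-1, 1}"
    and "\<forall>j\<in>B. \<sigma> i * W i j * \<sigma> j \<ge> 0"
  shows "\<sigma> i * (\<Sum>j\<in>B. W i j * \<sigma> j) = wsum W i B"
  unfolding wsum_def sum_distrib_left
proof (rule sum.cong)
  fix j assume j: "j \<in> B"
  then have "\<sigma> j \<in> {-1, 1}" and "\<sigma> i * W i j * \<sigma> j \<ge> 0"
    using assms unfolding profile_def by auto
  then show "\<sigma> i * (W i j * \<sigma> j) = \<bar>W i j\<bar>"
    using assms(2) by (auto simp: abs_if)
qed simp

lemma sum_join:
  assumes "finite R" "finite S" "R \<inter> S = {}"
  shows "(\<Sum>j\<in>R \<union> S. f j * join R y z j) = (\<Sum>j\<in>R. f j * y j) + (\<Sum>j\<in>S. f j * z j)"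
proof -
  have "(\<Sum>j\<in>S. f j * join R y z j) = (\<Sum>j\<in>S. f j * z j)"
    using assms(3) by (intro sum.cong) (auto simp: join_def)
  then show ?thesis
    using assms by (simp add: sum.union_disjoint join_def)
qed

lemma restricted_nash_best_response:
  assumes "restricted_nash V W h R S y z" and "i \<in> S" and "R \<inter> S = {}"
  shows "join R y z i \<in> best_response V W h i (join R y z)"
proof -
  have upd: "join R y (z(i := b)) = (join R y z)(i := b)" for b
    using assms(2,3) by (intro ext) (auto simp: join_def)
  have "join R y z i \<in> {-1, 1}"
    using assms by (auto simp: restricted_nash_def profile_def join_def)
  moreover have "utility V W h i ((join R y z)(i := b)) \<le> utility V W h i (join R y z)"
    if "b \<in> {-1, 1}" for b
    using assms(1,2) that by (auto simp: restricted_nash_def simp flip: upd)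
  ultimately show ?thesis
    by (simp add: best_response_def)
qed

lemma aligned_player_best_response:
  assumes "W i i = 0" and "finite R" "finite S" "R \<inter> S = {}" and "i \<in> R"
    and "profile R \<tau>" "profile S z"
    and "\<forall>j\<in>R. \<tau> i * W i j * \<tau> j \<ge> 0"
    and "wsum W i R + \<tau> i * h i \<ge> wsum W i S"
  shows "join R \<tau> z i \<in> best_response (R \<union> S) W h i (join R \<tau> z)"
proof -
  have \<tau>i: "\<tau> i \<in> {-1, 1}" and xi: "join R \<tau> z i = \<tau> i"
    using assms(5,6) by (auto simp: profile_def join_def)
  have "\<bar>\<Sum>j\<in>S. W i j * z j\<bar> \<le> wsum W i S"
    using assms(7) by (intro abs_sum_weighted_le_wsum) (auto simp: profile_def)
  then have "- wsum W i S \<le> \<tau> i * (\<Sum>j\<in>S. W i j * z j)"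
    using \<tau>i by (auto simp: abs_le_iff)
  moreover have "\<tau> i * (\<Sum>j\<in>R. W i j * \<tau> j) = wsum W i R"
    using assms(6) \<tau>i assms(8) by (rule sum_aligned_eq_wsum)
  moreover have "\<tau> i * local_field (R \<union> S) W h i (join R \<tau> z)
      = \<tau> i * h i + \<tau> i * (\<Sum>j\<in>R. W i j * \<tau> j) + \<tau> i * (\<Sum>j\<in>S. W i j * z j)"
    unfolding local_field_def sum_join[OF assms(2-4)] by (simp add: distrib_left)
  ultimately have "0 \<le> \<tau> i * local_field (R \<union> S) W h i (join R \<tau> z)"
    using assms(9) by linarith
  then show ?thesis
    using assms(1) \<tau>i xi by (intro best_responseI_sign) auto
qed

theorem theorem1:
  fixes V R S :: "'a set" and E :: "('a \<times> 'a) set"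
    and W :: "'a \<Rightarrow> 'a \<Rightarrow> real" and h \<tau> :: "'a \<Rightarrow> real"
  assumes net: "network V E W"
    and part: "R \<union> S = V" "R \<inter> S = {}"
    and bal: "structurally_balanced R W"
    and tau: "profile R \<tau>"
    and tauW: "\<forall>i\<in>R. \<forall>j\<in>R. \<tau> i * W i j * \<tau> j \<ge> 0"
    and cond: "\<forall>i\<in>R. wsum W i R + \<tau> i * h i \<ge> wsum W i S"
    and ne: "\<exists>z. restricted_nash V W h R S \<tau> z"
  shows "\<exists>x. nash V W h x \<and> (\<forall>i\<in>R. x i = \<tau> i)"
proof -
  obtain z where z: "restricted_nash V W h R S \<tau> z" using ne by blast
  then have z_profile: "profile S z"
    by (simp add: restricted_nash_def)
  have "finite V" and Wii: "\<And>i. W i i = 0"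
    using net unfolding network_def by metis+
  then have finite: "finite R" "finite S"
    using part(1) by auto
  have "join R \<tau> z i \<in> best_response V W h i (join R \<tau> z)" if "i \<in> V" for i
  proof (cases "i \<in> R")
    case True
    have "join R \<tau> z i \<in> best_response (R \<union> S) W h i (join R \<tau> z)"
      using Wii finite part(2) True tau z_profile tauW cond
      by (intro aligned_player_best_response) auto
    then show ?thesis
      using part(1) by simp
  next
    case False
    then show ?thesis
      using restricted_nash_best_response[OF z _ part(2)] that part(1) by blast
  qed
  moreover have "profile V (join R \<tau> z)"
    using z_profile tau part(1) by (auto simp: profile_def join_def)
  ultimately show ?thesis
    by (auto simp: nash_def join_def)
qed

end
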